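(* Let $I\subset\mathbb{R}$ be an open interval, $W\subset I$ a countable dense subset, $\mathrm{gr}\colon W\to\mathbb{N}$ a grading with finite fibers, $K>1$, and give the fractured interval $\check I$ the division metric with steepness $K$. Suppose that for every $\alpha>0$ there is $M>0$ with $\mathrm{gap}(r)\ge Mr^\alpha$ for all $r>0$. If $f$ is a Hölder function from $\check I$ to a metric space such that $f(w^L)=f(w^R)$ for all $w\in W$, then $f$ is constant.
   Context: The divided interval of $I$ at $W$ is $\hat I = \{w^{L}, \hat w, w^{R} : w\in W\}\sqcup (I\smallsetminus W)$, with $\pi\colon\hat I\to I$ sending $w^L,\hat w,w^R$ to $w$ and fixing $I\smallsetminus W$, totally ordered so that $\pi$ is order preserving and $w^L<\hat w<w^R$. For $a,b\in\hat I\cup\{\pm\infty\}$, $(a,b)=\{s: a<s<b\}$; basis intervals are the nonempty $(a,b)$ other than those with $a=w^L$ or $b=w^R$, and they generate the topology. The fractured interval is $\check I=\hat I\smallsetminus\{\hat w:w\in W\}$. The height of $\hat w$ is $K^{-\mathrm{gr}(w)}$, all other points have height $0$; the division metric is $d(a,b)=$ maximum height of points of $(a,b)\subset\hat I$ for $a<b$ in $\check I$. Let $W_{\ge r}=\{w\in W: K^{-\mathrm{gr}(w)}\ge r\}$ and $\mathrm{gap}(r)$ be the minimum Euclidean distance between distinct points of $W_{\ge r}$ (with $\mathrm{gap}(r)=+\infty$ if $W_{\ge r}$ has fewer than two points). Hölder means Hölder with some exponent $\nu>0$ with respect to $d$. *)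

theory Defs
  imports "HOL-Analysis.Analysis"
begin

text \<open>Points of the divided interval: for w in W the three points w^L, hat w, w^R;
  for x in I - W the point x itself.\<close>
datatype dpt = WL real | WH real | WR real | Pt real

fun proj :: "dpt \<Rightarrow> real" where
  "proj (WL x) = x" | "proj (WH x) = x" | "proj (WR x) = x" | "proj (Pt x) = x"

fun tag :: "dpt \<Rightarrow> int" where
  "tag (WL x) = -1" | "tag (WH x) = 0" | "tag (WR x) = 1" | "tag (Pt x) = 0"

definition dless :: "dpt \<Rightarrow> dpt \<Rightarrow> bool" where
  "dless a b \<longleftrightarrow> proj a < proj b \<or> (proj a = proj b \<and> tag a < tag b)"

definition divided_interval :: "real set \<Rightarrow> real set \<Rightarrow> dpt set" where
  "divided_interval I W = (\<Union>w\<in>W. {WL w, WH w, WR w}) \<union> Pt ` (I - W)"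

definition fractured_interval :: "real set \<Rightarrow> real set \<Rightarrow> dpt set" where
  "fractured_interval I W = divided_interval I W - WH ` W"

fun height :: "(real \<Rightarrow> nat) \<Rightarrow> real \<Rightarrow> dpt \<Rightarrow> real" where
  "height gr K (WH w) = K powr (- real (gr w))"
| "height gr K _ = 0"

definition division_metric ::
  "real set \<Rightarrow> real set \<Rightarrow> (real \<Rightarrow> nat) \<Rightarrow> real \<Rightarrow> dpt \<Rightarrow> dpt \<Rightarrow> real" where
  "division_metric I W gr K a b =
     Sup (insert 0 {height gr K p | p. p \<in> divided_interval I W \<and>
        ((dless a p \<and> dless p b) \<or> (dless b p \<and> dless p a))})"

definition W_ge :: "real set \<Rightarrow> (real \<Rightarrow> nat) \<Rightarrow> real \<Rightarrow> real \<Rightarrow> real set" where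
  "W_ge W gr K r = {w \<in> W. K powr (- real (gr w)) \<ge> r}"

text \<open>gap(r): minimum distance between distinct points of W_{>=r}; +infinity if there are
  fewer than two such points (Inf of the empty set in ereal).\<close>
definition gap :: "real set \<Rightarrow> (real \<Rightarrow> nat) \<Rightarrow> real \<Rightarrow> real \<Rightarrow> ereal" where
  "gap W gr K r = Inf {ereal \<bar>u - v\<bar> | u v. u \<in> W_ge W gr K r \<and> v \<in> W_ge W gr K r \<and> u \<noteq> v}"

definition holder_on :: "'a set \<Rightarrow> ('a \<Rightarrow> 'a \<Rightarrow> real) \<Rightarrow> ('a \<Rightarrow> 'b::metric_space) \<Rightarrow> bool" where
  "holder_on S d f \<longleftrightarrow> (\<exists>\<nu>>0. \<exists>C. \<forall>a\<in>S. \<forall>b\<in>S. dist (f a) (f b) \<le> C * d a b powr \<nu>)"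

end

theory Submission
  imports Defs
begin

text \<open>Fix a Hoelder exponent \<open>\<nu>\<close> and a scale \<open>r > 0\<close>. Between two points \<open>x < y\<close> of \<open>I\<close>
  the points of \<open>W\<^sub>\<ge>\<^sub>r\<close> are \<open>gap(r)\<close>-separated, hence there are at most
  \<open>(y - x)/gap(r) + 1\<close> of them, and cutting \<open>[x, y]\<close> at these points leaves segments of
  division length at most \<open>r\<close>. Since \<open>f(w\<^sup>L) = f(w\<^sup>R)\<close>, the triangle inequality bounds the
  distance between \<open>f(x\<^sup>R)\<close> and \<open>f(y\<^sup>L)\<close> by \<open>((y - x)/gap(r) + 2) C r\<^sup>\<nu>\<close>. Choosing
  \<open>\<alpha> = \<nu>/2\<close> in the gap hypothesis makes this \<open>O(r\<^sup>\<nu>\<^sup>/\<^sup>2)\<close>, which tends to \<open>0\<close>.\<close>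

definition left_pt :: "real set \<Rightarrow> real \<Rightarrow> dpt" where
  "left_pt W x = (if x \<in> W then WL x else Pt x)"

definition right_pt :: "real set \<Rightarrow> real \<Rightarrow> dpt" where
  "right_pt W x = (if x \<in> W then WR x else Pt x)"

lemma left_pt_in_fractured_interval: "x \<in> I \<Longrightarrow> left_pt W x \<in> fractured_interval I W"
  by (auto simp: left_pt_def fractured_interval_def divided_interval_def)

lemma right_pt_in_fractured_interval: "x \<in> I \<Longrightarrow> right_pt W x \<in> fractured_interval I W"
  by (auto simp: right_pt_def fractured_interval_def divided_interval_def)

lemma left_pt_right_pt_same_value:
  "\<forall>w\<in>W. f (WL w) = f (WR w) \<Longrightarrow> f (left_pt W x) = f (right_pt W x)"
  by (simp add: left_pt_def right_pt_def)

lemma fractured_interval_cases: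
  assumes "a \<in> fractured_interval I W" "W \<subseteq> I"
  obtains x where "x \<in> I" "a = left_pt W x \<or> a = right_pt W x"
  using assms by (auto simp: fractured_interval_def divided_interval_def left_pt_def right_pt_def)

lemma division_metric_right_left_le:
  assumes "x < y" "r > 0" "\<forall>u\<in>W. x < u \<and> u < y \<longrightarrow> K powr (- real (gr u)) < r"
  shows "0 \<le> division_metric I W gr K (right_pt W x) (left_pt W y)
    \<and> division_metric I W gr K (right_pt W x) (left_pt W y) \<le> r"
proof -
  define S where "S = {height gr K p | p. p \<in> divided_interval I W \<and>
    ((dless (right_pt W x) p \<and> dless p (left_pt W y)) \<or>
     (dless (left_pt W y) p \<and> dless p (right_pt W x)))}"
  have S_le: "s \<le> r" if "s \<in> S" for s
  proof -
    obtain p where p: "s = height gr K p" "p \<in> divided_interval I W"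
      "(dless (right_pt W x) p \<and> dless p (left_pt W y)) \<or>
       (dless (left_pt W y) p \<and> dless p (right_pt W x))"
      using \<open>s \<in> S\<close> unfolding S_def by blast
    show "s \<le> r"
    proof (cases p)
      case (WH u)
      then have "u \<in> W" using p(2) by (auto simp: divided_interval_def)
      moreover have "x < u \<and> u < y"
        using p(3) assms(1) \<open>u \<in> W\<close> unfolding WH dless_def right_pt_def left_pt_def
        by (auto split: if_splits)
      ultimately show ?thesis using assms(3) p(1) WH by force
    qed (use p(1) assms(2) in auto)
  qed
  have "bdd_above (insert 0 S)" using S_le by (auto intro!: bdd_aboveI[of _ r])
  then have "0 \<le> Sup (insert 0 S)" by (auto intro: cSup_upper)
  moreover have "Sup (insert 0 S) \<le> r" using S_le assms(2) by (auto intro: cSup_least)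
  ultimately show ?thesis unfolding division_metric_def S_def by simp
qed

lemma gap_le_dist:
  assumes "u \<in> W_ge W gr K r" "v \<in> W_ge W gr K r" "u \<noteq> v"
  shows "gap W gr K r \<le> ereal \<bar>u - v\<bar>"
  unfolding gap_def by (rule Inf_lower) (use assms in blast)

lemma separated_subset_card_le:
  fixes S :: "real set"
  assumes "x \<le> y" "S \<subseteq> {x..y}" "G > 0"
    and "\<forall>u\<in>S. \<forall>v\<in>S. u \<noteq> v \<longrightarrow> G \<le> \<bar>u - v\<bar>"
  shows "finite S \<and> real (card S) \<le> (y - x) / G + 1"
proof -
  define h where "h u = nat \<lfloor>(u - x) / G\<rfloor>" for u
  \<comment> \<open>points with the same value of \<open>h\<close> are less than \<open>G\<close> apart\<close>
  have inj: "inj_on h S"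
  proof (rule inj_onI, rule ccontr)
    fix u v assume uv: "u \<in> S" "v \<in> S" "h u = h v" "u \<noteq> v"
    then have "\<lfloor>(u - x) / G\<rfloor> = \<lfloor>(v - x) / G\<rfloor>"
      using assms(2,3) unfolding h_def by (metis atLeastAtMost_iff diff_ge_0_iff_ge
        divide_nonneg_pos eq_nat_nat_iff subsetD zero_le_floor)
    then have "\<bar>(u - x) / G - (v - x) / G\<bar> < 1" by linarith
    also have "(u - x) / G - (v - x) / G = (u - v) / G" by (simp add: diff_divide_distrib)
    finally have "\<bar>u - v\<bar> < G" using assms(3) by (simp add: abs_divide)
    then show False using assms(4) uv by force
  qed
  have img: "h ` S \<subseteq> {0..nat \<lfloor>(y - x) / G\<rfloor>}"
  proof
    fix z assume "z \<in> h ` S"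
    then obtain u where "u \<in> S" "z = h u" by blast
    then have "u \<le> y" "x \<le> u" using assms(2) by auto
    then show "z \<in> {0..nat \<lfloor>(y - x) / G\<rfloor>}"
      using \<open>z = h u\<close> assms(3) unfolding h_def
      by (auto intro!: nat_mono floor_mono divide_right_mono)
  qed
  have fin: "finite S" using inj_on_finite[OF inj img] by simp
  have "card S \<le> card {0..nat \<lfloor>(y - x) / G\<rfloor>}"
    using card_image[OF inj] card_mono[OF _ img] by simp
  moreover have "real (nat \<lfloor>(y - x) / G\<rfloor>) \<le> (y - x) / G" using assms(1,3) by simp
  ultimately show ?thesis using fin by simp
qed

lemma dist_le_card_breakpoints:
  fixes fL fR :: "real \<Rightarrow> 'b::metric_space"
  assumes "is_interval J" "\<forall>u\<in>S. fL u = fR u"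
    and seg: "\<And>a b. a \<in> J \<Longrightarrow> b \<in> J \<Longrightarrow> a < b \<Longrightarrow> S \<inter> {a<..<b} = {} \<Longrightarrow>
      dist (fR a) (fL b) \<le> e"
  shows "finite (S \<inter> {x<..<y}) \<Longrightarrow> x \<in> J \<Longrightarrow> y \<in> J \<Longrightarrow> x < y \<Longrightarrow>
    dist (fR x) (fL y) \<le> (real (card (S \<inter> {x<..<y})) + 1) * e"
proof (induction "card (S \<inter> {x<..<y})" arbitrary: y)
  case 0
  then show ?case using seg by simp
next
  case (Suc n)
  define u where "u = Max (S \<inter> {x<..<y})"
  have "S \<inter> {x<..<y} \<noteq> {}" using Suc.hyps(2) by auto
  then have "u \<in> S \<inter> {x<..<y}" using Max_in[OF Suc.prems(1)] u_def by simp
  then have u: "u \<in> S" "x < u" "u < y" by auto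
  have "u \<in> J"
    using assms(1) Suc.prems(2,3) u(2,3) unfolding is_interval_1 by (meson less_imp_le)
  have below: "v \<le> u" if "v \<in> S \<inter> {x<..<y}" for v
    using Max_ge[OF Suc.prems(1) that] u_def by simp
  have "S \<inter> {x<..<u} = (S \<inter> {x<..<y}) - {u}"
    using below u(3) by (auto simp: less_le)
  then have "card (S \<inter> {x<..<u}) = n" "finite (S \<inter> {x<..<u})"
    using Suc.hyps(2) Suc.prems(1) \<open>u \<in> S \<inter> {x<..<y}\<close> by simp_all
  then have "dist (fR x) (fL u) \<le> (real n + 1) * e"
    using Suc.hyps(1)[of u] Suc.prems(2) \<open>u \<in> J\<close> u(2) by simp
  moreover have "S \<inter> {u<..<y} = {}"
    using below u(2) by (force simp: not_le[symmetric])
  then have "dist (fR u) (fL y) \<le> e" using seg \<open>u \<in> J\<close> Suc.prems(3) u(3) by blast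
  ultimately have "dist (fR x) (fL u) + dist (fL u) (fL y) \<le> (real n + 1) * e + e"
    using assms(2) u(1) by simp
  then show ?case
    using dist_triangle[of "fR x" "fL y" "fL u"] Suc.hyps(2)[symmetric]
    by (simp add: algebra_simps)
qed

lemma nonpos_if_le_vanishing_powrs:
  fixes D A B a b :: real
  assumes "a > 0" "b > 0" "\<And>r. r > 0 \<Longrightarrow> D \<le> A * r powr a + B * r powr b"
  shows "D \<le> 0"
proof -
  have powr_to_0: "((\<lambda>r. r powr c) \<longlongrightarrow> 0) (at_right 0)" if "c > 0" for c :: real
    by (rule tendsto_zero_powrI)
      (auto intro: tendsto_ident_at eventually_at_rightI[of 0 1] simp: that)
  have "((\<lambda>r. A * r powr a + B * r powr b) \<longlongrightarrow> A * 0 + B * 0) (at_right 0)"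
    by (intro tendsto_intros powr_to_0 assms(1,2))
  moreover have "\<forall>\<^sub>F r in at_right 0. D \<le> A * r powr a + B * r powr b"
    using eventually_at_right_less[of "0::real"] by eventually_elim (rule assms(3))
  ultimately have "D \<le> A * 0 + B * 0"
    using tendsto_le[OF trivial_limit_at_right_real _ tendsto_const] by blast
  then show ?thesis by simp
qed

lemma holder_onE:
  assumes "holder_on S d f"
  obtains \<nu> C where "\<nu> > 0" "C \<ge> 0" "\<And>a b. a \<in> S \<Longrightarrow> b \<in> S \<Longrightarrow> dist (f a) (f b) \<le> C * d a b powr \<nu>"
proof -
  obtain \<nu> C where "\<nu> > 0" and C: "\<forall>a\<in>S. \<forall>b\<in>S. dist (f a) (f b) \<le> C * d a b powr \<nu>"
    using assms unfolding holder_on_def by blast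
  have "dist (f a) (f b) \<le> max C 0 * d a b powr \<nu>" if "a \<in> S" "b \<in> S" for a b
    using C that by (meson max.cobounded1 mult_right_mono order_trans powr_ge_zero)
  then show thesis using that \<open>\<nu> > 0\<close> by (meson max.cobounded2)
qed

lemma holder_dist_right_left_le:
  fixes f :: "dpt \<Rightarrow> 'b::metric_space"
  assumes "is_interval I" and jumps: "\<forall>w\<in>W. f (WL w) = f (WR w)"
    and holder: "\<And>a b. a \<in> fractured_interval I W \<Longrightarrow> b \<in> fractured_interval I W \<Longrightarrow>
      dist (f a) (f b) \<le> C * division_metric I W gr K a b powr \<nu>"
    and "\<nu> \<ge> 0" "C \<ge> 0" "r > 0" "G > 0"
    and separated: "\<forall>u\<in>W_ge W gr K r. \<forall>v\<in>W_ge W gr K r. u \<noteq> v \<longrightarrow> G \<le> \<bar>u - v\<bar>"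
    and "x \<in> I" "y \<in> I" "x < y"
  shows "dist (f (right_pt W x)) (f (left_pt W y)) \<le> ((y - x) / G + 2) * (C * r powr \<nu>)"
proof -
  let ?S = "W_ge W gr K r"
  have segment: "dist (f (right_pt W a)) (f (left_pt W b)) \<le> C * r powr \<nu>"
    if "a \<in> I" "b \<in> I" "a < b" "?S \<inter> {a<..<b} = {}" for a b
  proof -
    have "\<forall>u\<in>W. a < u \<and> u < b \<longrightarrow> K powr (- real (gr u)) < r"
      using that(4) unfolding W_ge_def by force
    then have "0 \<le> division_metric I W gr K (right_pt W a) (left_pt W b)"
      "division_metric I W gr K (right_pt W a) (left_pt W b) \<le> r"
      using division_metric_right_left_le[OF \<open>a < b\<close> \<open>r > 0\<close>] by auto
    then show ?thesis
      using holder[OF right_pt_in_fractured_interval left_pt_in_fractured_interval] that(1,2)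
        \<open>\<nu> \<ge> 0\<close> \<open>C \<ge> 0\<close> by (meson mult_left_mono order_trans powr_mono2)
  qed
  have count: "finite (?S \<inter> {x<..<y}) \<and> real (card (?S \<inter> {x<..<y})) \<le> (y - x) / G + 1"
    by (rule separated_subset_card_le) (use separated \<open>x < y\<close> \<open>G > 0\<close> in auto)
  have "\<forall>u\<in>?S. f (left_pt W u) = f (right_pt W u)"
    using left_pt_right_pt_same_value[OF jumps] by blast
  then have "dist (f (right_pt W x)) (f (left_pt W y))
      \<le> (real (card (?S \<inter> {x<..<y})) + 1) * (C * r powr \<nu>)"
    using dist_le_card_breakpoints[of I ?S "\<lambda>u. f (left_pt W u)" "\<lambda>u. f (right_pt W u)"]
      assms(1,9-11) count segment by blast
  also have "\<dots> \<le> ((y - x) / G + 2) * (C * r powr \<nu>)"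
    using count \<open>C \<ge> 0\<close> by (intro mult_right_mono) auto
  finally show ?thesis .
qed

lemma holder_gap_right_left_eq:
  fixes f :: "dpt \<Rightarrow> 'b::metric_space"
  assumes "is_interval I" "\<forall>w\<in>W. f (WL w) = f (WR w)"
    and holder: "\<And>a b. a \<in> fractured_interval I W \<Longrightarrow> b \<in> fractured_interval I W \<Longrightarrow>
      dist (f a) (f b) \<le> C * division_metric I W gr K a b powr \<nu>"
    and "\<nu> > 0" "C \<ge> 0" "M > 0"
    and gap: "\<forall>r>0. gap W gr K r \<ge> ereal (M * r powr (\<nu>/2))"
    and "x \<in> I" "y \<in> I" "x < y"
  shows "f (right_pt W x) = f (left_pt W y)"
proof -
  have "dist (f (right_pt W x)) (f (left_pt W y))
      \<le> C * (y - x) / M * r powr (\<nu>/2) + 2 * C * r powr \<nu>" if "r > 0" for r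
  proof -
    have "M * r powr (\<nu>/2) \<le> \<bar>u - v\<bar>"
      if "u \<in> W_ge W gr K r" "v \<in> W_ge W gr K r" "u \<noteq> v" for u v
      using gap_le_dist[OF that] gap \<open>r > 0\<close> order_trans by fastforce
    then have "dist (f (right_pt W x)) (f (left_pt W y))
        \<le> ((y - x) / (M * r powr (\<nu>/2)) + 2) * (C * r powr \<nu>)"
      using holder_dist_right_left_le[OF assms(1,2) holder] assms(4-6,8-10) \<open>r > 0\<close> by simp
    also have "\<dots> = C * (y - x) / M * r powr (\<nu>/2) + 2 * C * r powr \<nu>"
    proof -
      have "r powr \<nu> = r powr (\<nu>/2) * r powr (\<nu>/2)"
        by (simp add: powr_add[symmetric])
      then show ?thesis using \<open>M > 0\<close> \<open>r > 0\<close> by (simp add: field_simps)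
    qed
    finally show ?thesis .
  qed
  then have "dist (f (right_pt W x)) (f (left_pt W y)) \<le> 0"
    by (rule nonpos_if_le_vanishing_powrs[rotated 2]) (use \<open>\<nu> > 0\<close> in auto)
  then show ?thesis by simp
qed

theorem corollary3p11:
  fixes I W :: "real set" and gr :: "real \<Rightarrow> nat" and K :: real
    and f :: "dpt \<Rightarrow> 'b::metric_space"
  assumes "open I" and "is_interval I"
    and "countable W" and "W \<subseteq> I" and "I \<subseteq> closure W"
    and "\<forall>n. finite {w \<in> W. gr w = n}"
    and "K > 1"
    and "\<forall>\<alpha>>0. \<exists>M>0. \<forall>r>0. gap W gr K r \<ge> ereal (M * r powr \<alpha>)"
    and "holder_on (fractured_interval I W) (division_metric I W gr K) f"
    and "\<forall>w\<in>W. f (WL w) = f (WR w)"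
  shows "\<exists>c. \<forall>a\<in>fractured_interval I W. f a = c"
proof -
  obtain \<nu> C where "\<nu> > 0" "C \<ge> 0" and holder: "\<And>a b. a \<in> fractured_interval I W \<Longrightarrow>
      b \<in> fractured_interval I W \<Longrightarrow> dist (f a) (f b) \<le> C * division_metric I W gr K a b powr \<nu>"
    using holder_onE[OF assms(9)] by blast
  obtain M where "M > 0" and gap: "\<forall>r>0. gap W gr K r \<ge> ereal (M * r powr (\<nu>/2))"
    using assms(8) \<open>\<nu> > 0\<close> half_gt_zero by blast
  have across: "f (right_pt W x) = f (left_pt W y)" if "x \<in> I" "y \<in> I" "x < y" for x y
    using holder_gap_right_left_eq[OF assms(2,10) holder] \<open>\<nu> > 0\<close> \<open>C \<ge> 0\<close> \<open>M > 0\<close> gap that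
    by blast
  note same_value = left_pt_right_pt_same_value[OF assms(10)]
  have left_const: "f (left_pt W x) = f (left_pt W y)" if "x \<in> I" "y \<in> I" for x y
    using that by (cases x y rule: linorder_cases) (simp_all add: across same_value)
  show ?thesis
  proof (cases "fractured_interval I W = {}")
    case False
    then obtain b where b: "b \<in> fractured_interval I W" by blast
    obtain y where "y \<in> I" "f b = f (left_pt W y)"
      using fractured_interval_cases[OF b assms(4)] same_value by metis
    moreover have "f a = f (left_pt W y)" if "a \<in> fractured_interval I W" for a
      using fractured_interval_cases[OF that assms(4)] left_const same_value \<open>y \<in> I\<close> by metis
    ultimately show ?thesis by metis
  qed simp
qed

end
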